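(* Let $T$ be a ring which is integral over its center $C(T)$ and satisfies $J(T)=0$. Then either $T$ has a maximal subring or $T$ is a commutative ring.
   Context: All rings are associative with identity $1\neq 0$, and subrings contain the identity of the ambient ring. A maximal subring of a ring $T$ is a proper subring $S\subsetneq T$ such that there is no subring strictly between $S$ and $T$. $C(T)$ denotes the center of $T$. $T$ is integral over its center if every $t\in T$ is a root of a monic polynomial of degree $\geq 1$ with coefficients in $C(T)$. $J(T)$ is the Jacobson radical of $T$. *)

theory Defs
  imports Main
begin

text \<open>Rings are modelled as types of class ring_1 (associative, with 1, and 1 ~= 0
  via zero_neq_one). Subrings contain the identity.\<close>

definition is_subring :: "'a::ring_1 set \<Rightarrow> bool" where
  "is_subring S \<longleftrightarrow> 1 \<in> S \<and> 0 \<in> S \<and> (\<forall>x\<in>S. \<forall>y\<in>S. x + y \<in> S \<and> x * y \<in> S) \<and> (\<forall>x\<in>S. - x \<in> S)"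

definition maximal_subring :: "'a::ring_1 set \<Rightarrow> bool" where
  "maximal_subring S \<longleftrightarrow> is_subring S \<and> S \<noteq> UNIV \<and>
     (\<forall>R. is_subring R \<and> S \<subseteq> R \<longrightarrow> R = S \<or> R = UNIV)"

definition center :: "'a::ring_1 set" where
  "center = {z. \<forall>x. z * x = x * z}"

definition integral_over_center :: "'a::ring_1 itself \<Rightarrow> bool" where
  "integral_over_center _ \<longleftrightarrow> (\<forall>t::'a. \<exists>n::nat. \<exists>c::nat \<Rightarrow> 'a. n \<ge> 1 \<and>
      (\<forall>i<n. c i \<in> center) \<and> t ^ n + (\<Sum>i<n. c i * t ^ i) = 0)"

definition left_ideal :: "'a::ring_1 set \<Rightarrow> bool" where
  "left_ideal I \<longleftrightarrow> 0 \<in> I \<and> (\<forall>x\<in>I. \<forall>y\<in>I. x + y \<in> I) \<and> (\<forall>x\<in>I. - x \<in> I)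
     \<and> (\<forall>r. \<forall>x\<in>I. r * x \<in> I)"

definition maximal_left_ideal :: "'a::ring_1 set \<Rightarrow> bool" where
  "maximal_left_ideal I \<longleftrightarrow> left_ideal I \<and> I \<noteq> UNIV \<and>
     (\<forall>K. left_ideal K \<and> I \<subseteq> K \<longrightarrow> K = I \<or> K = UNIV)"

definition jacobson :: "'a::ring_1 set" where
  "jacobson = \<Inter>{I. maximal_left_ideal I}"

end

theory Submission
  imports Defs
begin

text \<open>Suppose \<open>T\<close> is not commutative, say \<open>a b \<noteq> b a\<close>. Since \<open>J(T) = 0\<close> there is a maximal
  left ideal \<open>M\<close> with \<open>a b - b a \<notin> M\<close>. If \<open>M\<close> is not two-sided, its idealizer
  \<open>{t. M t \<subseteq> M}\<close> is a maximal subring. Otherwise \<open>D = T/M\<close> is a division ring in which \<open>a\<close> is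
  algebraic of some degree \<open>N\<close> over the centre and does not commute with \<open>b\<close>. The divided
  difference \<open>\<Delta>(d) = \<Sum>\<^sub>k c\<^sub>k (\<Sum>\<^bsub>i + j = k - 1\<^esub> a\<^sup>i d a\<^sup>j)\<close> of the minimal polynomial \<open>\<Sum>\<^sub>k c\<^sub>k a\<^sup>k\<close>
  takes values in the centralizer of \<open>a\<close>, and since \<open>1, a, \<dots>, a\<^sup>N\<^sup>-\<^sup>1\<close> are independent over
  the centre, the \<open>D\<close>-bimodule generated by \<open>(1, a, \<dots>, a\<^sup>N\<^sup>-\<^sup>1)\<close> is all of \<open>D\<^sup>N\<close>. Writing the
  last unit vector as \<open>\<Sum> u\<^sub>j (a\<^sup>i)\<^sub>i v\<^sub>j\<close> gives \<open>d = \<Sum> u\<^sub>j \<Delta>(v\<^sub>j d)\<close> for every \<open>d\<close>. Hence \<open>T\<close> is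
  generated by the preimage of the centralizer of \<open>a\<close>, a proper subring, together with the
  finitely many \<open>u\<^sub>j\<close>, and Zorn's lemma yields a maximal subring.\<close>

section \<open>Left ideals and idealizers\<close>

lemma left_ideal_zero: "left_ideal I \<Longrightarrow> 0 \<in> I"
  by (simp add: left_ideal_def)

lemma left_ideal_add: "left_ideal I \<Longrightarrow> a \<in> I \<Longrightarrow> b \<in> I \<Longrightarrow> a + b \<in> I"
  by (simp add: left_ideal_def)

lemma left_ideal_minus: "left_ideal I \<Longrightarrow> a \<in> I \<Longrightarrow> - a \<in> I"
  by (simp add: left_ideal_def)

lemma left_ideal_mult_left: "left_ideal I \<Longrightarrow> a \<in> I \<Longrightarrow> r * a \<in> I"
  by (simp add: left_ideal_def)

lemma left_ideal_diff: "left_ideal I \<Longrightarrow> a \<in> I \<Longrightarrow> b \<in> I \<Longrightarrow> a - b \<in> I"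
  by (metis left_ideal_add left_ideal_minus diff_conv_add_uminus)

lemma left_ideal_diff_commute: "left_ideal I \<Longrightarrow> a - b \<in> I \<Longrightarrow> b - a \<in> I"
  by (metis left_ideal_minus minus_diff_eq)

lemma left_ideal_sum: "left_ideal I \<Longrightarrow> (\<And>i. i \<in> A \<Longrightarrow> f i \<in> I) \<Longrightarrow> sum f A \<in> I"
  by (induction A rule: infinite_finite_induct) (auto simp: left_ideal_zero left_ideal_add)

lemma left_ideal_eq_UNIV_iff:
  assumes "left_ideal I"
  shows "I = UNIV \<longleftrightarrow> 1 \<in> I"
proof
  assume "1 \<in> I"
  then have "r \<in> I" for r using left_ideal_mult_left[OF assms, of 1 r] by simp
  then show "I = UNIV" by blast
qed simp

lemma left_ideal_UNIV: "left_ideal (UNIV :: 'a::ring_1 set)"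
  by (simp add: left_ideal_def)

lemma left_ideal_mult_right_image:
  assumes I: "left_ideal I"
  shows "left_ideal ((\<lambda>i. i * a) ` I)"
  unfolding left_ideal_def
proof (intro conjI ballI allI)
  show "0 \<in> (\<lambda>i. i * a) ` I"
    using left_ideal_zero[OF I] by (rule rev_image_eqI) simp
  fix u v assume "u \<in> (\<lambda>i. i * a) ` I" "v \<in> (\<lambda>i. i * a) ` I"
  then obtain i j where "u = i * a" "v = j * a" "i \<in> I" "j \<in> I" by blast
  then show "u + v \<in> (\<lambda>i. i * a) ` I"
    using left_ideal_add[OF I] by (intro rev_image_eqI[of "i + j"]) (simp_all add: distrib_right)
next
  fix u assume "u \<in> (\<lambda>i. i * a) ` I"
  then obtain i where "u = i * a" "i \<in> I" by blast
  then show "- u \<in> (\<lambda>i. i * a) ` I"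
    using left_ideal_minus[OF I] by (intro rev_image_eqI[of "- i"]) simp_all
next
  fix r u assume "u \<in> (\<lambda>i. i * a) ` I"
  then obtain i where "u = i * a" "i \<in> I" by blast
  then show "r * u \<in> (\<lambda>i. i * a) ` I"
    using left_ideal_mult_left[OF I] by (intro rev_image_eqI[of "r * i"]) (simp_all add: mult.assoc)
qed

lemma left_ideal_set_plus:
  assumes I: "left_ideal I" and K: "left_ideal K"
  shows "left_ideal {i + k | i k. i \<in> I \<and> k \<in> K}"
  unfolding left_ideal_def
proof (intro conjI ballI allI)
  show "0 \<in> {i + k | i k. i \<in> I \<and> k \<in> K}"
    using left_ideal_zero[OF I] left_ideal_zero[OF K]
    by (intro CollectI exI[of _ 0] exI[of _ 0]) simp
next
  fix u v assume "u \<in> {i + k | i k. i \<in> I \<and> k \<in> K}" "v \<in> {i + k | i k. i \<in> I \<and> k \<in> K}"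
  then obtain i k i' k' where "u = i + k" "v = i' + k'" "i \<in> I" "k \<in> K" "i' \<in> I" "k' \<in> K"
    by blast
  then show "u + v \<in> {i + k | i k. i \<in> I \<and> k \<in> K}"
    by (intro CollectI exI[of _ "i + i'"] exI[of _ "k + k'"])
      (auto simp: left_ideal_add[OF I] left_ideal_add[OF K] algebra_simps)
next
  fix u assume "u \<in> {i + k | i k. i \<in> I \<and> k \<in> K}"
  then obtain i k where "u = i + k" "i \<in> I" "k \<in> K" by blast
  then show "- u \<in> {i + k | i k. i \<in> I \<and> k \<in> K}"
    by (intro CollectI exI[of _ "- i"] exI[of _ "- k"])
      (auto simp: left_ideal_minus[OF I] left_ideal_minus[OF K])
next
  fix r u assume "u \<in> {i + k | i k. i \<in> I \<and> k \<in> K}"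
  then obtain i k where "u = i + k" "i \<in> I" "k \<in> K" by blast
  then show "r * u \<in> {i + k | i k. i \<in> I \<and> k \<in> K}"
    by (intro CollectI exI[of _ "r * i"] exI[of _ "r * k"])
      (auto simp: left_ideal_mult_left[OF I] left_ideal_mult_left[OF K] distrib_left)
qed

lemma maximal_left_ideal_set_plus_eq_UNIV:
  assumes M: "maximal_left_ideal M" and K: "left_ideal K" "\<not> K \<subseteq> M"
  shows "{m + k | m k. m \<in> M \<and> k \<in> K} = UNIV"
proof -
  let ?S = "{m + k | m k. m \<in> M \<and> k \<in> K}"
  have li: "left_ideal M" using M by (simp add: maximal_left_ideal_def)
  have MS: "M \<subseteq> ?S"
  proof
    fix m assume "m \<in> M"
    then show "m \<in> ?S" using left_ideal_zero[OF K(1)] by (intro CollectI exI[of _ m] exI[of _ 0]) simp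
  qed
  have "K \<subseteq> ?S"
  proof
    fix k assume "k \<in> K"
    then show "k \<in> ?S" using left_ideal_zero[OF li] by (intro CollectI exI[of _ 0] exI[of _ k]) simp
  qed
  then have "?S \<noteq> M" using K(2) by blast
  moreover have "left_ideal ?S" using li K(1) by (rule left_ideal_set_plus)
  ultimately show ?thesis
    using M MS unfolding maximal_left_ideal_def by blast
qed

lemma maximal_left_ideal_left_inverse:
  assumes M: "maximal_left_ideal M" and t: "t \<notin> M"
  shows "\<exists>s. s * t - 1 \<in> M"
proof -
  have "left_ideal (range (\<lambda>r. r * t))"
    by (rule left_ideal_mult_right_image[OF left_ideal_UNIV])
  moreover have "\<not> range (\<lambda>r. r * t) \<subseteq> M"
  proof
    assume "range (\<lambda>r. r * t) \<subseteq> M"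
    then have "1 * t \<in> M" by blast
    then show False using t by simp
  qed
  ultimately have "{m + k | m k. m \<in> M \<and> k \<in> range (\<lambda>r. r * t)} = UNIV"
    by (rule maximal_left_ideal_set_plus_eq_UNIV[OF M])
  then have "1 \<in> {m + k | m k. m \<in> M \<and> k \<in> range (\<lambda>r. r * t)}" by simp
  then obtain m k where "1 = m + k" "m \<in> M" "k \<in> range (\<lambda>r. r * t)" by blast
  then obtain s where s: "1 = m + s * t" and m: "m \<in> M" by blast
  have "left_ideal M" using M by (simp add: maximal_left_ideal_def)
  then have "- m \<in> M" using m by (rule left_ideal_minus)
  moreover have "s * t - 1 = - m" using s by (simp add: algebra_simps)
  ultimately have "s * t - 1 \<in> M" by simp
  then show ?thesis ..
qed

definition idealizer :: "'a::ring_1 set \<Rightarrow> 'a set" where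
  "idealizer I = {t. \<forall>m\<in>I. m * t \<in> I}"

lemma is_subring_idealizer: "left_ideal I \<Longrightarrow> is_subring (idealizer I)"
  unfolding is_subring_def idealizer_def
  by (auto simp: left_ideal_zero left_ideal_add left_ideal_minus distrib_left mult.assoc[symmetric])

lemma subset_idealizer: "left_ideal I \<Longrightarrow> I \<subseteq> idealizer I"
  by (auto simp: idealizer_def left_ideal_mult_left)

lemma maximal_subring_idealizer:
  assumes M: "maximal_left_ideal M" and proper: "idealizer M \<noteq> UNIV"
  shows "maximal_subring (idealizer M)"
  unfolding maximal_subring_def
proof (intro conjI allI impI)
  have li: "left_ideal M" using M by (simp add: maximal_left_ideal_def)
  show "is_subring (idealizer M)" using li by (rule is_subring_idealizer)
  show "idealizer M \<noteq> UNIV" by (fact proper)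
  fix R assume R: "is_subring R \<and> idealizer M \<subseteq> R"
  show "R = idealizer M \<or> R = UNIV"
  proof (cases "R = idealizer M")
    case False
    then obtain a where a: "a \<in> R" "a \<notin> idealizer M" using R by blast
    then have "\<not> (\<lambda>m. m * a) ` M \<subseteq> M" by (auto simp: idealizer_def)
    then have sum: "{m + k | m k. m \<in> M \<and> k \<in> (\<lambda>m. m * a) ` M} = UNIV"
      by (intro maximal_left_ideal_set_plus_eq_UNIV M left_ideal_mult_right_image li)
    have MR: "M \<subseteq> R" using R subset_idealizer[OF li] by blast
    have "t \<in> R" for t
    proof -
      have "t \<in> {m + k | m k. m \<in> M \<and> k \<in> (\<lambda>m. m * a) ` M}" using sum by simp
      then obtain m k where "t = m + k" "m \<in> M" "k \<in> (\<lambda>m. m * a) ` M" by blast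
      then obtain m' where "t = m + m' * a" "m \<in> M" "m' \<in> M" by blast
      then show "t \<in> R" using R a(1) MR unfolding is_subring_def by blast
    qed
    then show ?thesis by blast
  qed simp
qed

section \<open>Maximal subrings via Zorn's lemma\<close>

lemma is_subring_Union_chain:
  assumes "C \<noteq> {}" and "subset.chain {R. is_subring R} C"
  shows "is_subring (\<Union>C)"
proof -
  have sub: "\<And>R. R \<in> C \<Longrightarrow> is_subring R"
    and ch: "\<And>R S. R \<in> C \<Longrightarrow> S \<in> C \<Longrightarrow> R \<subseteq> S \<or> S \<subseteq> R"
    using assms(2) unfolding subset.chain_def by blast+
  have common: "\<exists>R\<in>C. a \<in> R \<and> b \<in> R" if ab: "a \<in> \<Union>C" "b \<in> \<Union>C" for a b
  proof -
    obtain R S where "R \<in> C" "S \<in> C" "a \<in> R" "b \<in> S" using ab by blast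
    then show ?thesis using ch[of R S] by blast
  qed
  obtain R0 where "R0 \<in> C" using assms(1) by blast
  then have "1 \<in> \<Union>C" "0 \<in> \<Union>C" using sub[of R0] unfolding is_subring_def by blast+
  moreover have "a + b \<in> \<Union>C \<and> a * b \<in> \<Union>C" if ab: "a \<in> \<Union>C" "b \<in> \<Union>C" for a b
  proof -
    obtain R where "R \<in> C" "a \<in> R" "b \<in> R" using common[OF ab] by blast
    then show ?thesis using sub[of R] unfolding is_subring_def by blast
  qed
  moreover have "- a \<in> \<Union>C" if a: "a \<in> \<Union>C" for a
  proof -
    obtain R where "R \<in> C" "a \<in> R" using a by blast
    then show ?thesis using sub[of R] unfolding is_subring_def by blast
  qed
  ultimately show ?thesis unfolding is_subring_def by blast
qed

lemma exists_maximal_subring_above: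
  assumes A: "is_subring A" "A \<noteq> UNIV" and G: "finite G"
    and generates: "\<And>R. is_subring R \<Longrightarrow> A \<subseteq> R \<Longrightarrow> G \<subseteq> R \<Longrightarrow> R = UNIV"
  shows "\<exists>S. maximal_subring S \<and> A \<subseteq> S"
proof -
  define F where "F = {R. is_subring R \<and> A \<subseteq> R \<and> \<not> G \<subseteq> R}"
  have "A \<in> F" using A generates unfolding F_def by blast
  moreover have "\<Union>C \<in> F" if C: "C \<noteq> {}" "subset.chain F C" for C
  proof -
    have "subset.chain {R. is_subring R} C"
      using C(2) unfolding subset.chain_def F_def by blast
    then have "is_subring (\<Union>C)" by (rule is_subring_Union_chain[OF C(1)])
    moreover have "A \<subseteq> \<Union>C" using C unfolding subset.chain_def F_def by blast
    moreover have "\<not> G \<subseteq> \<Union>C"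
    proof
      assume "G \<subseteq> \<Union>C"
      then obtain R where "R \<in> C" "G \<subseteq> R" using finite_subset_Union_chain[OF G _ C(1,2)] by blast
      then show False using C(2) unfolding subset.chain_def F_def by blast
    qed
    ultimately show ?thesis unfolding F_def by blast
  qed
  ultimately obtain S where S: "S \<in> F" "\<And>X. X \<in> F \<Longrightarrow> S \<subseteq> X \<Longrightarrow> X = S"
    using subset_Zorn_nonempty[of F] by blast
  have "maximal_subring S"
    unfolding maximal_subring_def
  proof (intro conjI allI impI)
    show "is_subring S" "S \<noteq> UNIV" using S(1) unfolding F_def by blast+
    fix R assume R: "is_subring R \<and> S \<subseteq> R"
    then have "A \<subseteq> R" using S(1) unfolding F_def by blast
    show "R = S \<or> R = UNIV"
    proof (cases "G \<subseteq> R")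
      case True
      then show ?thesis using generates R \<open>A \<subseteq> R\<close> by blast
    next
      case False
      then have "R \<in> F" using R \<open>A \<subseteq> R\<close> unfolding F_def by blast
      then show ?thesis using S(2) R by blast
    qed
  qed
  then show ?thesis using S(1) unfolding F_def by blast
qed

section \<open>Bimodule spans and divided differences\<close>

inductive_set bimodule_span :: "(nat \<Rightarrow> 'a::ring_1) \<Rightarrow> (nat \<Rightarrow> 'a) set" for a where
  generator: "a \<in> bimodule_span a"
| zero: "(\<lambda>i. 0) \<in> bimodule_span a"
| add: "f \<in> bimodule_span a \<Longrightarrow> g \<in> bimodule_span a \<Longrightarrow> (\<lambda>i. f i + g i) \<in> bimodule_span a"
| mult_left: "f \<in> bimodule_span a \<Longrightarrow> (\<lambda>i. t * f i) \<in> bimodule_span a"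
| mult_right: "f \<in> bimodule_span a \<Longrightarrow> (\<lambda>i. f i * t) \<in> bimodule_span a"

lemma bimodule_span_diff:
  assumes "f \<in> bimodule_span a" "g \<in> bimodule_span a"
  shows "(\<lambda>i. f i - g i) \<in> bimodule_span a"
  using bimodule_span.add[OF assms(1) bimodule_span.mult_left[OF assms(2), of "- 1"]] by simp

lemma bimodule_span_commutator:
  "f \<in> bimodule_span a \<Longrightarrow> (\<lambda>i. f i * t - t * f i) \<in> bimodule_span a"
  by (intro bimodule_span_diff bimodule_span.mult_left bimodule_span.mult_right)

lemma bimodule_span_sum:
  "(\<And>i. i \<in> I \<Longrightarrow> F i \<in> bimodule_span a) \<Longrightarrow> (\<lambda>j. \<Sum>i\<in>I. F i j) \<in> bimodule_span a"
proof (induction I rule: infinite_finite_induct)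
  case (insert i I)
  then show ?case using bimodule_span.add[of "F i" a "\<lambda>j. \<Sum>i\<in>I. F i j"] by simp
qed (simp_all add: bimodule_span.zero)

text \<open>\<open>diff_quot f d x k = (\<Sum>i<k. f i * d * x ^ (k - 1 - i))\<close>; for \<open>f = (\<lambda>i. x ^ i)\<close> this is
  the divided difference of \<open>X ^ k\<close>, with \<open>d\<close> inserted between the two variables.\<close>
fun diff_quot :: "(nat \<Rightarrow> 'a::ring_1) \<Rightarrow> 'a \<Rightarrow> 'a \<Rightarrow> nat \<Rightarrow> 'a" where
  "diff_quot f d x 0 = 0"
| "diff_quot f d x (Suc k) = f k * d + diff_quot f d x k * x"

lemma diff_quot_zero: "diff_quot (\<lambda>i. 0) d x k = 0"
  by (induction k) auto

lemma diff_quot_add: "diff_quot (\<lambda>i. f i + g i) d x k = diff_quot f d x k + diff_quot g d x k"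
  by (induction k) (auto simp: algebra_simps)

lemma diff_quot_mult_left: "diff_quot (\<lambda>i. t * f i) d x k = t * diff_quot f d x k"
  by (induction k) (auto simp: algebra_simps)

lemma diff_quot_mult_right: "diff_quot (\<lambda>i. f i * t) d x k = diff_quot f (t * d) x k"
  by (induction k) (auto simp: algebra_simps)

lemma diff_quot_unit_vector:
  "diff_quot (\<lambda>i. if i = n then 1 else 0) d x k = (if n < k then d * x ^ (k - 1 - n) else 0)"
proof (induction k)
  case (Suc k)
  show ?case
  proof (cases "n < k")
    case True
    then have "Suc k - 1 - n = Suc (k - 1 - n)" by simp
    then show ?thesis using Suc True by (simp add: mult.assoc power_Suc2 del: power_Suc)
  qed (use Suc in \<open>auto simp: not_less_eq\<close>)
qed simp

lemma diff_quot_powers_commutator: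
  "x * diff_quot (\<lambda>i. x ^ i) d x k - diff_quot (\<lambda>i. x ^ i) d x k * x = x ^ k * d - d * x ^ k"
proof (induction k)
  case (Suc k)
  let ?D = "diff_quot (\<lambda>i. x ^ i) d x k"
  have "x * diff_quot (\<lambda>i. x ^ i) d x (Suc k) - diff_quot (\<lambda>i. x ^ i) d x (Suc k) * x
      = x ^ Suc k * d - x ^ k * d * x + (x * ?D - ?D * x) * x"
    by (simp add: algebra_simps)
  also have "\<dots> = x ^ Suc k * d - x ^ k * d * x + (x ^ k * d - d * x ^ k) * x"
    using Suc by simp
  also have "\<dots> = x ^ Suc k * d - d * x ^ Suc k"
    by (simp add: algebra_simps power_Suc2 del: power_Suc)
  finally show ?case .
qed simp

section \<open>The division ring \<open>T/M\<close>\<close>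

text \<open>A maximal left ideal that is also a right ideal: \<open>T/M\<close> is then a division ring, whose
  elements are handled through their representatives in \<open>T\<close>.\<close>
locale division_quotient =
  fixes M :: "'a::ring_1 set"
  assumes maximal: "maximal_left_ideal M"
    and mult_right_mem: "\<And>m t. m \<in> M \<Longrightarrow> m * t \<in> M"
begin

lemma left_ideal: "left_ideal M"
  using maximal by (simp add: maximal_left_ideal_def)

lemma one_not_mem: "1 \<notin> M"
  using maximal left_ideal_eq_UNIV_iff[OF left_ideal] by (simp add: maximal_left_ideal_def)

lemmas zero_mem = left_ideal_zero[OF left_ideal]
  and add_mem = left_ideal_add[OF left_ideal]
  and minus_mem = left_ideal_minus[OF left_ideal]
  and diff_mem = left_ideal_diff[OF left_ideal]
  and diff_mem_commute = left_ideal_diff_commute[OF left_ideal]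
  and mult_left_mem = left_ideal_mult_left[OF left_ideal]
  and sum_mem = left_ideal_sum[OF left_ideal]

lemma left_inverse: "t \<notin> M \<Longrightarrow> \<exists>s. s * t - 1 \<in> M"
  using maximal by (rule maximal_left_ideal_left_inverse)

lemma diff_quot_cong:
  "(\<And>i. i < k \<Longrightarrow> f i - g i \<in> M) \<Longrightarrow> diff_quot f d x k - diff_quot g d x k \<in> M"
proof (induction k)
  case (Suc k)
  have "diff_quot f d x (Suc k) - diff_quot g d x (Suc k)
      = (f k - g k) * d + (diff_quot f d x k - diff_quot g d x k) * x"
    by (simp add: algebra_simps)
  then show ?case using Suc by (simp add: add_mem mult_right_mem)
qed (simp add: zero_mem)

definition center_mod :: "'a set" where
  "center_mod = {z. \<forall>t. z * t - t * z \<in> M}"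

lemma center_subset_center_mod: "center \<subseteq> center_mod"
  by (auto simp: center_def center_mod_def zero_mem)

lemma subset_center_mod: "M \<subseteq> center_mod"
  by (auto simp: center_mod_def diff_mem mult_left_mem mult_right_mem)

lemma add_center_mod: "z \<in> center_mod \<Longrightarrow> w \<in> center_mod \<Longrightarrow> z + w \<in> center_mod"
proof -
  assume z: "z \<in> center_mod" and w: "w \<in> center_mod"
  have "(z + w) * t - t * (z + w) = (z * t - t * z) + (w * t - t * w)" for t
    by (simp add: algebra_simps)
  then show ?thesis using z w by (auto simp: center_mod_def add_mem)
qed

lemma minus_center_mod: "z \<in> center_mod \<Longrightarrow> - z \<in> center_mod"
proof -
  assume z: "z \<in> center_mod"
  have "(- z) * t - t * (- z) = t * z - z * t" for t
    by (simp add: algebra_simps)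
  moreover have "t * z - z * t \<in> M" for t
  proof (rule diff_mem_commute)
    show "z * t - t * z \<in> M" using z by (simp add: center_mod_def)
  qed
  ultimately show ?thesis by (simp add: center_mod_def)
qed

lemma mult_center_mod: "z \<in> center_mod \<Longrightarrow> w \<in> center_mod \<Longrightarrow> z * w \<in> center_mod"
proof -
  assume z: "z \<in> center_mod" and w: "w \<in> center_mod"
  have "z * w * t - t * (z * w) = z * (w * t - t * w) + (z * t - t * z) * w" for t
    by (simp add: algebra_simps)
  then show ?thesis using z w by (auto simp: center_mod_def add_mem mult_left_mem mult_right_mem)
qed

lemma center_mod_inverse:
  assumes z: "z \<in> center_mod" "z \<notin> M"
  shows "\<exists>w\<in>center_mod. z * w - 1 \<in> M"
proof -
  obtain s where s: "s * z - 1 \<in> M" using left_inverse z(2) by blast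
  have "z * s - s * z \<in> M" using z(1) by (simp add: center_mod_def)
  then have "(z * s - s * z) + (s * z - 1) \<in> M" using s by (rule add_mem)
  then have zs: "z * s - 1 \<in> M" by simp
  have "s * t - t * s \<in> M" for t
  proof -
    text \<open>Conjugate \<open>t * z - z * t \<in> M\<close> by the two-sided inverse \<open>s\<close> of \<open>z\<close>.\<close>
    have eq: "s * t - t * s = (s * t) * (- (z * s - 1)) + s * (t * z - z * t) * s + (s * z - 1) * t * s"
      by (simp add: algebra_simps)
    have "t * z - z * t \<in> M"
      using z(1) diff_mem_commute[of "z * t" "t * z"] by (simp add: center_mod_def)
    then show ?thesis
      unfolding eq using zs s by (intro add_mem mult_left_mem mult_right_mem minus_mem)
  qed
  then show ?thesis using zs by (auto simp: center_mod_def)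
qed

definition centralizer_mod :: "'a \<Rightarrow> 'a set" where
  "centralizer_mod x = {e. e * x - x * e \<in> M}"

lemma is_subring_centralizer_mod: "is_subring (centralizer_mod x)"
  unfolding is_subring_def
proof (intro conjI ballI)
  show "1 \<in> centralizer_mod x" "0 \<in> centralizer_mod x"
    by (simp_all add: centralizer_mod_def zero_mem)
  fix a b assume a: "a \<in> centralizer_mod x" and b: "b \<in> centralizer_mod x"
  have "(a + b) * x - x * (a + b) = (a * x - x * a) + (b * x - x * b)"
    by (simp add: algebra_simps)
  then show "a + b \<in> centralizer_mod x"
    using a b by (simp add: centralizer_mod_def add_mem)
  have "(a * b) * x - x * (a * b) = a * (b * x - x * b) + (a * x - x * a) * b"
    by (simp add: algebra_simps)
  then show "a * b \<in> centralizer_mod x"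
    using a b by (simp add: centralizer_mod_def add_mem mult_left_mem mult_right_mem)
next
  fix a assume a: "a \<in> centralizer_mod x"
  have "(- a) * x - x * (- a) = x * a - a * x"
    by (simp add: algebra_simps)
  then show "- a \<in> centralizer_mod x"
    using a diff_mem_commute[of "a * x" "x * a"] by (simp add: centralizer_mod_def)
qed

lemma subset_centralizer_mod: "M \<subseteq> centralizer_mod x"
  by (auto simp: centralizer_mod_def diff_mem mult_left_mem mult_right_mem)

lemma centralizer_mod_neq_UNIV:
  assumes "x \<notin> center_mod"
  shows "centralizer_mod x \<noteq> UNIV"
proof
  assume "centralizer_mod x = UNIV"
  then have "x * t - t * x \<in> M" for t
    using diff_mem_commute[of "t * x" "x * t"] by (auto simp: centralizer_mod_def)
  then show False using assms by (simp add: center_mod_def)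
qed

lemma diff_quot_powers_commutator_mod:
  assumes c: "c \<in> center_mod"
  shows "x * (diff_quot (\<lambda>i. x ^ i) d x k * c) - diff_quot (\<lambda>i. x ^ i) d x k * c * x
      - (x ^ k * c * d - d * (x ^ k * c)) \<in> M"
proof -
  let ?D = "diff_quot (\<lambda>i. x ^ i) d x k"
  have "x * (?D * c) - ?D * c * x - (x ^ k * c * d - d * (x ^ k * c))
      = (x * ?D - ?D * x) * c + ?D * (x * c - c * x) - x ^ k * c * d + d * (x ^ k * c)"
    by (simp add: algebra_simps)
  also have "\<dots> = (x ^ k * d - d * x ^ k) * c + ?D * (x * c - c * x) - x ^ k * c * d + d * (x ^ k * c)"
    by (simp only: diff_quot_powers_commutator)
  also have "\<dots> = x ^ k * (d * c - c * d) + ?D * (x * c - c * x)"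
    by (simp add: algebra_simps)
  finally have eq: "x * (?D * c) - ?D * c * x - (x ^ k * c * d - d * (x ^ k * c))
      = x ^ k * (d * c - c * d) + ?D * (x * c - c * x)" .
  have "d * c - c * d \<in> M" "x * c - c * x \<in> M"
    using c diff_mem_commute[of "c * d" "d * c"] diff_mem_commute[of "c * x" "x * c"]
    by (simp_all add: center_mod_def)
  then show ?thesis unfolding eq by (intro add_mem mult_left_mem)
qed

lemma bimodule_span_extend_approx:
  assumes approx: "\<And>g. \<exists>f\<in>bimodule_span a. \<forall>i<m. f i - g i \<in> M"
    and pivot: "h \<in> bimodule_span a" "\<forall>i<m. h i \<in> M" "h m \<notin> M"
  shows "\<exists>f\<in>bimodule_span a. \<forall>i<Suc m. f i - g i \<in> M"
proof -
  obtain s where s: "s * h m - 1 \<in> M" using left_inverse pivot(3) by blast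
  obtain f where f: "f \<in> bimodule_span a" "\<forall>i<m. f i - g i \<in> M" using approx by blast
  define u where "u = g m - f m"
  define f' where "f' = (\<lambda>i. f i + u * (s * h i))"
  have "f' \<in> bimodule_span a"
    unfolding f'_def using f(1) pivot(1) by (intro bimodule_span.intros)
  moreover have "f' i - g i \<in> M" if "i < Suc m" for i
  proof (cases "i < m")
    case True
    have eq: "f' i - g i = (f i - g i) + u * (s * h i)"
      unfolding f'_def by (simp add: algebra_simps)
    show ?thesis
      unfolding eq using True f(2) pivot(2) by (intro add_mem mult_left_mem) simp_all
  next
    case False
    then have "i = m" using that by simp
    then have "f' i - g i = u * (s * h m - 1)"
      unfolding f'_def u_def by (simp add: algebra_simps)
    then show ?thesis using s by (simp add: mult_left_mem)
  qed
  ultimately show ?thesis by blast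
qed

lemma bimodule_span_center_mod_propagate:
  assumes no_pivot: "\<And>h. h \<in> bimodule_span a \<Longrightarrow> \<forall>i<m. h i \<in> M \<Longrightarrow> h m \<in> M"
    and h: "h \<in> bimodule_span a" "\<forall>i<m. h i \<in> center_mod"
  shows "h m \<in> center_mod"
proof -
  have "h m * t - t * h m \<in> M" for t
    using no_pivot[OF bimodule_span_commutator[OF h(1)]] h(2) by (simp add: center_mod_def)
  then show ?thesis by (simp add: center_mod_def)
qed

text \<open>Without a pivot at \<open>m\<close>, the map \<open>f \<mapsto> f m\<close> on the span factors through the
  components below \<open>m\<close>; a bimodule map \<open>(T/M)\<^sup>m \<rightarrow> T/M\<close> is given by central coefficients.\<close>
lemma bimodule_span_dependent:
  assumes no_pivot: "\<And>h. h \<in> bimodule_span a \<Longrightarrow> \<forall>i<m. h i \<in> M \<Longrightarrow> h m \<in> M"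
    and approx: "\<And>g. \<exists>f\<in>bimodule_span a. \<forall>i<m. f i - g i \<in> M"
  shows "\<exists>c. (\<forall>i<m. c i \<in> center_mod) \<and> a m - (\<Sum>i<m. a i * c i) \<in> M"
proof -
  let ?\<delta> = "\<lambda>i j. if j = i then 1 else (0::'a)"
  have "\<forall>i. \<exists>f. f \<in> bimodule_span a \<and> (\<forall>j<m. f j - ?\<delta> i j \<in> M)"
    using approx[of "?\<delta> _"] by blast
  then obtain L where "\<forall>i. L i \<in> bimodule_span a \<and> (\<forall>j<m. L i j - ?\<delta> i j \<in> M)"
    using choice[of "\<lambda>i f. f \<in> bimodule_span a \<and> (\<forall>j<m. f j - ?\<delta> i j \<in> M)"] by blast
  then have L: "\<And>i. L i \<in> bimodule_span a" "\<And>i j. j < m \<Longrightarrow> L i j - ?\<delta> i j \<in> M"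
    by blast+
  have "L i j \<in> center_mod" if "j < m" for i j
  proof -
    have "?\<delta> i j \<in> center_mod"
      using center_subset_center_mod by (auto simp: center_def)
    moreover have "L i j - ?\<delta> i j \<in> center_mod"
      using L(2)[OF that] subset_center_mod by blast
    ultimately have "?\<delta> i j + (L i j - ?\<delta> i j) \<in> center_mod" by (rule add_center_mod)
    then show ?thesis by simp
  qed
  then have center: "L i m \<in> center_mod" for i
    by (intro bimodule_span_center_mod_propagate[OF no_pivot L(1)]) simp_all
  define g where "g = (\<lambda>j. a j - (\<Sum>i<m. a i * L i j))"
  have "g \<in> bimodule_span a"
    unfolding g_def
    by (intro bimodule_span_diff bimodule_span.generator bimodule_span_sum bimodule_span.mult_left L(1))
  moreover have "g j \<in> M" if "j < m" for j
  proof -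
    have "(\<Sum>i<m. a i * ?\<delta> i j) = a j"
      using that by (simp add: sum.delta' if_distrib cong: if_cong)
    then have "g j = - (\<Sum>i<m. a i * (L i j - ?\<delta> i j))"
      unfolding g_def by (simp add: right_diff_distrib sum_subtractf)
    then show ?thesis using L(2)[OF that] by (simp add: minus_mem sum_mem mult_left_mem)
  qed
  ultimately have "g m \<in> M" using no_pivot by blast
  then show ?thesis
    using center unfolding g_def by (intro exI[of _ "\<lambda>i. L i m"]) simp
qed

end

section \<open>Algebraic elements of \<open>T/M\<close>\<close>

locale algebraic_mod = division_quotient +
  fixes x :: 'a
  assumes integral: "\<exists>n c. n \<ge> 1 \<and> (\<forall>i<n. c i \<in> center) \<and> x ^ n + (\<Sum>i<n. c i * x ^ i) = 0"
begin

definition monic_relation :: "nat \<Rightarrow> bool" where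
  "monic_relation k \<longleftrightarrow> k \<ge> 1 \<and> (\<exists>c. (\<forall>i<k. c i \<in> center_mod) \<and> x ^ k + (\<Sum>i<k. x ^ i * c i) \<in> M)"

definition degree_mod :: nat where
  "degree_mod = (LEAST k. monic_relation k)"

lemma monic_relation_degree_mod: "monic_relation degree_mod"
proof -
  obtain n c where nc: "n \<ge> 1" "\<forall>i<n. c i \<in> center" "x ^ n + (\<Sum>i<n. c i * x ^ i) = 0"
    using integral by blast
  have "(\<Sum>i<n. c i * x ^ i) = (\<Sum>i<n. x ^ i * c i)"
    using nc(2) by (intro sum.cong) (auto simp: center_def)
  then have "monic_relation n"
    using nc center_subset_center_mod zero_mem unfolding monic_relation_def
    by (auto intro!: exI[of _ c])
  then show ?thesis unfolding degree_mod_def by (rule LeastI)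
qed

lemma degree_mod_pos: "degree_mod \<ge> 1"
  using monic_relation_degree_mod by (simp add: monic_relation_def)

lemma not_monic_relation_below_degree_mod: "k < degree_mod \<Longrightarrow> \<not> monic_relation k"
  unfolding degree_mod_def by (rule not_less_Least)

lemma powers_independent:
  assumes "m \<le> degree_mod" "\<forall>i<m. c i \<in> center_mod" "(\<Sum>i<m. x ^ i * c i) \<in> M"
  shows "\<forall>i<m. c i \<in> M"
  using assms
proof (induction m)
  case (Suc m)
  show ?case
  proof (cases "c m \<in> M")
    case True
    have "(\<Sum>i<Suc m. x ^ i * c i) - x ^ m * c m \<in> M"
      using Suc.prems(3) True by (intro diff_mem mult_left_mem)
    then have "\<forall>i<m. c i \<in> M" using Suc by simp
    then show ?thesis using True less_Suc_eq by auto
  next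
    case False
    text \<open>Normalising by an inverse of the leading coefficient gives a monic relation of
      degree \<open>m < degree_mod\<close>.\<close>
    obtain w where w: "w \<in> center_mod" "c m * w - 1 \<in> M"
      using center_mod_inverse False Suc.prems(2) by blast
    have eq: "x ^ m + (\<Sum>i<m. x ^ i * (c i * w))
        = (\<Sum>i<Suc m. x ^ i * c i) * w - x ^ m * (c m * w - 1)"
      by (simp add: algebra_simps sum_distrib_right)
    have "x ^ m + (\<Sum>i<m. x ^ i * (c i * w)) \<in> M"
      unfolding eq using Suc.prems(3) w(2) by (rule diff_mem[OF mult_right_mem mult_left_mem])
    moreover have "\<forall>i<m. c i * w \<in> center_mod" using Suc.prems(2) w(1) mult_center_mod by simp
    moreover have "m \<noteq> 0"
    proof
      assume "m = 0"
      then have "c m \<in> M" using Suc.prems(3) by simp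
      then show False using False by simp
    qed
    ultimately have "monic_relation m" unfolding monic_relation_def by auto
    then show ?thesis using not_monic_relation_below_degree_mod Suc.prems(1) by simp
  qed
qed simp

lemma bimodule_span_powers_pivot:
  assumes m: "m < degree_mod"
    and approx: "\<And>g. \<exists>f\<in>bimodule_span (\<lambda>i. x ^ i). \<forall>i<m. f i - g i \<in> M"
  shows "\<exists>h\<in>bimodule_span (\<lambda>i. x ^ i). (\<forall>i<m. h i \<in> M) \<and> h m \<notin> M"
proof (rule ccontr)
  assume "\<not> ?thesis"
  then obtain c where c: "\<forall>i<m. c i \<in> center_mod" "x ^ m - (\<Sum>i<m. x ^ i * c i) \<in> M"
    using bimodule_span_dependent[OF _ approx] by blast
  define c' where "c' = (\<lambda>i. if i < m then - c i else 1)"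
  have "(\<Sum>i<Suc m. x ^ i * c' i) = x ^ m - (\<Sum>i<m. x ^ i * c i)"
    unfolding c'_def by (simp add: sum_negf)
  then have "(\<Sum>i<Suc m. x ^ i * c' i) \<in> M" using c(2) by simp
  moreover have "\<forall>i<Suc m. c' i \<in> center_mod"
    using c(1) minus_center_mod center_subset_center_mod by (auto simp: c'_def center_def)
  ultimately have "c' m \<in> M" using powers_independent[of "Suc m" c'] m by simp
  then show False using one_not_mem by (simp add: c'_def)
qed

lemma bimodule_span_powers_dense:
  "m \<le> degree_mod \<Longrightarrow> \<exists>f\<in>bimodule_span (\<lambda>i. x ^ i). \<forall>i<m. f i - g i \<in> M"
proof (induction m arbitrary: g)
  case 0
  show ?case using bimodule_span.zero by blast
next
  case (Suc m)
  then obtain h where "h \<in> bimodule_span (\<lambda>i. x ^ i)" "\<forall>i<m. h i \<in> M" "h m \<notin> M"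
    using bimodule_span_powers_pivot[of m] by auto
  then show ?case using bimodule_span_extend_approx Suc by simp
qed

definition min_poly_coeff :: "nat \<Rightarrow> 'a" where
  "min_poly_coeff = (SOME c. c degree_mod = 1 \<and> (\<forall>i\<le>degree_mod. c i \<in> center_mod)
      \<and> (\<Sum>i\<le>degree_mod. x ^ i * c i) \<in> M)"

lemma min_poly_coeff:
  "min_poly_coeff degree_mod = 1 \<and> (\<forall>i\<le>degree_mod. min_poly_coeff i \<in> center_mod)
     \<and> (\<Sum>i\<le>degree_mod. x ^ i * min_poly_coeff i) \<in> M"
proof -
  let ?P = "\<lambda>c. c degree_mod = 1 \<and> (\<forall>i\<le>degree_mod. c i \<in> center_mod)
      \<and> (\<Sum>i\<le>degree_mod. x ^ i * c i) \<in> M"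
  obtain c where c: "\<forall>i<degree_mod. c i \<in> center_mod"
      "x ^ degree_mod + (\<Sum>i<degree_mod. x ^ i * c i) \<in> M"
    using monic_relation_degree_mod unfolding monic_relation_def by blast
  define c' where "c' = c(degree_mod := 1)"
  have "(\<Sum>i<degree_mod. x ^ i * c' i) = (\<Sum>i<degree_mod. x ^ i * c i)"
    unfolding c'_def by (intro sum.cong) auto
  then have "(\<Sum>i\<le>degree_mod. x ^ i * c' i) = x ^ degree_mod + (\<Sum>i<degree_mod. x ^ i * c i)"
    by (simp add: lessThan_Suc_atMost[symmetric] c'_def add.commute)
  moreover have "\<forall>i\<le>degree_mod. c' i \<in> center_mod"
    using c(1) center_subset_center_mod by (auto simp: c'_def center_def)
  ultimately have "c' degree_mod = 1 \<and> (\<forall>i\<le>degree_mod. c' i \<in> center_mod)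
      \<and> (\<Sum>i\<le>degree_mod. x ^ i * c' i) \<in> M"
    using c(2) by (simp add: c'_def)
  then show ?thesis unfolding min_poly_coeff_def by (rule someI[where P = ?P])
qed

text \<open>For \<open>f = (\<lambda>i. x ^ i)\<close>, \<open>delta f\<close> is the divided difference of the minimal polynomial
  \<open>p\<close> of \<open>x\<close>; its commutator with \<open>x\<close> is \<open>p(x) d - d p(x) = 0\<close> in \<open>T/M\<close>.\<close>
definition delta :: "(nat \<Rightarrow> 'a) \<Rightarrow> 'a \<Rightarrow> 'a" where
  "delta f d = (\<Sum>k\<le>degree_mod. diff_quot f d x k * min_poly_coeff k)"

lemma delta_powers_mem_centralizer_mod: "delta (\<lambda>i. x ^ i) d \<in> centralizer_mod x"
proof -
  let ?c = min_poly_coeff and ?D = "\<lambda>k. diff_quot (\<lambda>i. x ^ i) d x k"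
  define p where "p = (\<Sum>k\<le>degree_mod. x ^ k * ?c k)"
  have "x * delta (\<lambda>i. x ^ i) d - delta (\<lambda>i. x ^ i) d * x - (p * d - d * p)
      = (\<Sum>k\<le>degree_mod. x * (?D k * ?c k) - ?D k * ?c k * x - (x ^ k * ?c k * d - d * (x ^ k * ?c k)))"
    unfolding delta_def p_def
    by (simp only: sum_distrib_left sum_distrib_right sum_subtractf)
  also have "\<dots> \<in> M"
    using min_poly_coeff by (intro sum_mem diff_quot_powers_commutator_mod) simp
  finally have "x * delta (\<lambda>i. x ^ i) d - delta (\<lambda>i. x ^ i) d * x - (p * d - d * p) \<in> M" .
  moreover have "p * d - d * p \<in> M"
    using min_poly_coeff unfolding p_def by (intro diff_mem mult_right_mem mult_left_mem) simp_all
  ultimately have "(x * delta (\<lambda>i. x ^ i) d - delta (\<lambda>i. x ^ i) d * x - (p * d - d * p))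
      + (p * d - d * p) \<in> M"
    by (rule add_mem)
  then have "x * delta (\<lambda>i. x ^ i) d - delta (\<lambda>i. x ^ i) d * x \<in> M" by simp
  then have "delta (\<lambda>i. x ^ i) d * x - x * delta (\<lambda>i. x ^ i) d \<in> M" by (rule diff_mem_commute)
  then show ?thesis by (simp add: centralizer_mod_def)
qed

lemma delta_zero: "delta (\<lambda>i. 0) d = 0"
  by (simp add: delta_def diff_quot_zero)

lemma delta_add: "delta (\<lambda>i. f i + g i) d = delta f d + delta g d"
  by (simp add: delta_def diff_quot_add distrib_right sum.distrib)

lemma delta_mult_left: "delta (\<lambda>i. t * f i) d = t * delta f d"
  by (simp add: delta_def diff_quot_mult_left mult.assoc sum_distrib_left)

lemma delta_mult_right: "delta (\<lambda>i. f i * t) d = delta f (t * d)"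
  by (simp add: delta_def diff_quot_mult_right)

text \<open>\<open>G\<close> collects the left multipliers used in building \<open>f\<close>.\<close>
lemma delta_bimodule_span:
  "f \<in> bimodule_span (\<lambda>i. x ^ i) \<Longrightarrow> \<exists>G. finite G \<and>
     (\<forall>R d. is_subring R \<longrightarrow> centralizer_mod x \<subseteq> R \<longrightarrow> G \<subseteq> R \<longrightarrow> delta f d \<in> R)"
proof (induction rule: bimodule_span.induct)
  case generator
  show ?case using delta_powers_mem_centralizer_mod by blast
next
  case zero
  show ?case by (auto simp: delta_zero is_subring_def)
next
  case (add f g)
  then obtain F G where "finite F" "finite G"
    "\<forall>R d. is_subring R \<longrightarrow> centralizer_mod x \<subseteq> R \<longrightarrow> F \<subseteq> R \<longrightarrow> delta f d \<in> R"
    "\<forall>R d. is_subring R \<longrightarrow> centralizer_mod x \<subseteq> R \<longrightarrow> G \<subseteq> R \<longrightarrow> delta g d \<in> R"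
    by blast
  then show ?case
    by (intro exI[of _ "F \<union> G"]) (auto simp: delta_add is_subring_def)
next
  case (mult_left f t)
  then obtain G where "finite G"
    "\<forall>R d. is_subring R \<longrightarrow> centralizer_mod x \<subseteq> R \<longrightarrow> G \<subseteq> R \<longrightarrow> delta f d \<in> R"
    by blast
  then show ?case
    by (intro exI[of _ "insert t G"]) (auto simp: delta_mult_left is_subring_def)
next
  case (mult_right f t)
  then obtain G where "finite G"
    "\<forall>R d. is_subring R \<longrightarrow> centralizer_mod x \<subseteq> R \<longrightarrow> G \<subseteq> R \<longrightarrow> delta f d \<in> R"
    by blast
  then show ?case
    by (intro exI[of _ G]) (simp add: delta_mult_right)
qed

lemma delta_approx_unit_vector:
  assumes f: "\<forall>i<degree_mod. f i - (if i = degree_mod - 1 then 1 else 0) \<in> M"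
  shows "delta f d - d \<in> M"
proof -
  let ?e = "\<lambda>i. if i = degree_mod - 1 then 1 else (0::'a)"
  obtain n where n: "degree_mod = Suc n" using degree_mod_pos by (cases degree_mod) auto
  have "(\<Sum>k\<le>n. diff_quot ?e d x k * min_poly_coeff k) = 0"
    by (intro sum.neutral) (auto simp: diff_quot_unit_vector n)
  then have "delta ?e d = d"
    using min_poly_coeff by (simp add: delta_def n diff_quot_unit_vector)
  moreover have "delta f d - delta ?e d = (\<Sum>k\<le>degree_mod. (diff_quot f d x k - diff_quot ?e d x k) * min_poly_coeff k)"
    by (simp add: delta_def left_diff_distrib sum_subtractf)
  moreover have "\<dots> \<in> M"
    using f by (intro sum_mem mult_right_mem diff_quot_cong) auto
  ultimately show ?thesis by simp
qed

lemma finitely_generated_over_centralizer_mod: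
  "\<exists>G. finite G \<and> (\<forall>R. is_subring R \<longrightarrow> centralizer_mod x \<subseteq> R \<longrightarrow> G \<subseteq> R \<longrightarrow> R = UNIV)"
proof -
  obtain f where f: "f \<in> bimodule_span (\<lambda>i. x ^ i)"
      "\<forall>i<degree_mod. f i - (if i = degree_mod - 1 then 1 else 0) \<in> M"
    using bimodule_span_powers_dense[of degree_mod "\<lambda>i. if i = degree_mod - 1 then 1 else 0"] by auto
  obtain G where G: "finite G"
      "\<And>R d. is_subring R \<Longrightarrow> centralizer_mod x \<subseteq> R \<Longrightarrow> G \<subseteq> R \<Longrightarrow> delta f d \<in> R"
    using delta_bimodule_span[OF f(1)] by blast
  have "R = UNIV" if R: "is_subring R" "centralizer_mod x \<subseteq> R" "G \<subseteq> R" for R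
  proof -
    have "d \<in> R" for d
    proof -
      have "delta f d \<in> R" using G(2) R by blast
      moreover have "- (delta f d - d) \<in> M"
        using delta_approx_unit_vector[OF f(2)] by (rule minus_mem)
      then have "- (delta f d - d) \<in> R"
        using subset_centralizer_mod R(2) by blast
      ultimately have "delta f d + - (delta f d - d) \<in> R"
        using R(1) unfolding is_subring_def by blast
      then show ?thesis by simp
    qed
    then show ?thesis by blast
  qed
  then show ?thesis using G(1) by blast
qed

lemma exists_maximal_subring:
  assumes "x \<notin> center_mod"
  shows "\<exists>S :: 'a set. maximal_subring S"
proof -
  obtain G where G: "finite G"
      "\<And>R. is_subring R \<Longrightarrow> centralizer_mod x \<subseteq> R \<Longrightarrow> G \<subseteq> R \<Longrightarrow> R = UNIV"
    using finitely_generated_over_centralizer_mod by blast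
  have "\<exists>S. maximal_subring S \<and> centralizer_mod x \<subseteq> S"
  proof (rule exists_maximal_subring_above)
    show "is_subring (centralizer_mod x)" by (rule is_subring_centralizer_mod)
    show "centralizer_mod x \<noteq> UNIV" using assms by (rule centralizer_mod_neq_UNIV)
    show "finite G" by (fact G(1))
  qed (use G(2) in blast)
  then show ?thesis by blast
qed

end

theorem theorem3p6:
  assumes "integral_over_center TYPE('a::ring_1)"
    and "(jacobson :: 'a set) = {0}"
  shows "(\<exists>S::'a set. maximal_subring S) \<or> (\<forall>x y::'a. x * y = y * x)"
proof (rule disjCI)
  assume "\<not> (\<forall>x y::'a. x * y = y * x)"
  then obtain a b :: 'a where "a * b - b * a \<noteq> 0" by auto
  then have "a * b - b * a \<notin> (jacobson :: 'a set)" unfolding assms(2) by simp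
  then obtain M :: "'a set" where M: "maximal_left_ideal M" "a * b - b * a \<notin> M"
    unfolding jacobson_def by blast
  show "\<exists>S::'a set. maximal_subring S"
  proof (cases "idealizer M = UNIV")
    case False
    then show ?thesis using maximal_subring_idealizer[OF M(1)] by blast
  next
    case True
    then have "m * t \<in> M" if "m \<in> M" for m t
      using that by (auto simp: idealizer_def)
    moreover have "\<exists>n c. n \<ge> 1 \<and> (\<forall>i<n. c i \<in> center) \<and> a ^ n + (\<Sum>i<n. c i * a ^ i) = 0"
      using assms(1) unfolding integral_over_center_def by blast
    ultimately interpret algebraic_mod M a
      using M(1) by unfold_locales
    have "a \<notin> center_mod" using M(2) by (auto simp: center_mod_def)
    then show ?thesis by (rule exists_maximal_subring)
  qed
qed

end
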